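(* Let $n\ge 2$ and $p\ge 2$ be integers, let $\kappa\in\{0,1\}$, and let $f^0,f^1\in\mathbb{R}^n$ with $f^0,f^1\ge 0$ componentwise and $\|f^0\|_1=\|f^1\|_1$. With the matrices $S_M,D_M,S_F,D_F$, the vectors $f_b^{+},f_b^{-}$ and the function $J$ defined in the context, the discrete dynamic transport problem $$\min_{m\in\mathbb{R}^{(n-\kappa)p},\ f\in\mathbb{R}^{n(p-1)},\ u,v\in\mathbb{R}^{np}} \|J(u,v)\|_1 \quad\text{subject to}\quad S_M m=u,\quad S_F f+f_b^{+}=v,\quad D_M m+D_F f=f_b^{-}$$ has a solution (a minimizer).
   Context: The unknowns are a discrete density $f=(f(j-\tfrac12,k))_{j=1,\dots,n;\,k=1,\dots,p-1}$ and a discrete momentum $m=(m(j,k-\tfrac12))_{j=\kappa,\dots,n-1;\,k=1,\dots,p}$, reordered columnwise (time index $k$ as outer block index) into vectors $f\in\mathbb{R}^{n(p-1)}$, $m\in\mathbb{R}^{(n-\kappa)p}$. Here $\kappa=1$ corresponds to Neumann and $\kappa=0$ to periodic spatial boundary conditions. $\otimes$ is the Kronecker product, $I_k$ the $k\times k$ identity, $0_k$ the zero vector of length $k$. Matrices: $S_p\in\mathbb{R}^{p-1,p}$ has $j$-th row $\tfrac12(e_j+e_{j+1})^{T}$; $D_p\in\mathbb{R}^{p-1,p}$ has $j$-th row $p(-e_j+e_{j+1})^{T}$, $j=1,\dots,p-1$. Analogously $S_n,D_n\in\mathbb{R}^{n-1,n}$ have $j$-th rows $\tfrac12(e_j+e_{j+1})^{T}$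 and $n(-e_j+e_{j+1})^{T}$. $S_{n,per}\in\mathbb{R}^{n,n}$ has first row $\tfrac12(e_1+e_n)^T$ and $j$-th row $\tfrac12(e_{j-1}+e_j)^T$ for $j=2,\dots,n$; $D_{n,per}\in\mathbb{R}^{n,n}$ has first row $n(-e_1+e_n)^T$ and $j$-th row $n(e_{j-1}-e_j)^T$ for $j=2,\dots,n$. Set $S_F:=S_p^{T}\otimes I_n$, $D_F:=-D_p^{T}\otimes I_n$, and $S_M:=I_p\otimes S_n^{T}$, $D_M:=I_p\otimes(-D_n^{T})$ in the Neumann case $\kappa=1$, while $S_M:=I_p\otimes S_{n,per}^{T}$, $D_M:=I_p\otimes D_{n,per}^{T}$ in the periodic case $\kappa=0$. Vectors: $f_b^{+}:=\tfrac12\big((f^0)^T,0_{n(p-2)}^T,(f^1)^T\big)^T\in\mathbb{R}^{np}$ and $f_b^{-}:=p\big((f^0)^T,0_{n(p-2)}^T,-(f^1)^T\big)^T\in\mathbb{R}^{np}$. $J$ acts componentwise: for $u,v\in\mathbb{R}^{np}$, $J(u,v)_i=\frac{u_i^2}{2v_i}$ if $v_i>0$, $J(u,v)_i=0$ if $(u_i,v_i)=(0,0)$, and $J(u,v)_i=+\infty$ otherwise; $\|J(u,v)\|_1=\sum_i J(u,v)_i$. *)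

theory Defs
  imports Complex_Main "HOL-Library.Extended_Real"
begin

text \<open>Conventions: vectors in R^N are functions nat => real, only the entries with
  index 0..N-1 are meaningful (0-based indexing). Matrices are functions
  nat => nat => real, entry (i,j) with 0-based row i and column j; the dimensions
  are carried explicitly where needed.\<close>

type_synonym rmat = "nat \<Rightarrow> nat \<Rightarrow> real"

definition mat_vec :: "rmat \<Rightarrow> nat \<Rightarrow> (nat \<Rightarrow> real) \<Rightarrow> (nat \<Rightarrow> real)" where
  "mat_vec A ncols x = (\<lambda>i. \<Sum>j<ncols. A i j * x j)"

definition mtrans :: "rmat \<Rightarrow> rmat" where
  "mtrans A = (\<lambda>i j. A j i)"

definition mneg :: "rmat \<Rightarrow> rmat" where
  "mneg A = (\<lambda>i j. - A i j)"

definition ident :: rmat where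
  "ident = (\<lambda>i j. if i = j then 1 else 0)"

definition kron :: "rmat \<Rightarrow> nat \<Rightarrow> nat \<Rightarrow> rmat \<Rightarrow> rmat" where
  "kron A rB cB B = (\<lambda>i j. A (i div rB) (j div cB) * B (i mod rB) (j mod cB))"

text \<open>S_k in R^{k-1,k}: row j is (e_j + e_{j+1})/2 (0-based).\<close>
definition Smat :: "nat \<Rightarrow> rmat" where
  "Smat k = (\<lambda>i j. if j = i \<or> j = i + 1 then 1/2 else 0)"

text \<open>D_k in R^{k-1,k}: row j is k(-e_j + e_{j+1}) (0-based).\<close>
definition Dmat :: "nat \<Rightarrow> rmat" where
  "Dmat k = (\<lambda>i j. if j = i then - real k else if j = i + 1 then real k else 0)"

text \<open>S_{n,per}: first row (e_1+e_n)/2, row j (e_{j-1}+e_j)/2 (here 0-based).\<close>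
definition Sper :: "nat \<Rightarrow> rmat" where
  "Sper n = (\<lambda>i j. if i = 0 then (if j = 0 \<or> j = n - 1 then 1/2 else 0)
                   else (if j = i - 1 \<or> j = i then 1/2 else 0))"

text \<open>D_{n,per}: first row n(-e_1+e_n), row j n(e_{j-1}-e_j) (here 0-based).\<close>
definition Dper :: "nat \<Rightarrow> rmat" where
  "Dper n = (\<lambda>i j. if i = 0 then (if j = 0 then - real n else if j = n - 1 then real n else 0)
                   else (if j = i - 1 then real n else if j = i then - real n else 0))"

definition SF :: "nat \<Rightarrow> nat \<Rightarrow> rmat" where
  "SF n p = kron (mtrans (Smat p)) n n ident"

definition DF :: "nat \<Rightarrow> nat \<Rightarrow> rmat" where
  "DF n p = kron (mneg (mtrans (Dmat p))) n n ident"

text \<open>S_M, D_M: Neumann case kappa = 1, periodic case kappa = 0.\<close>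
definition SM :: "nat \<Rightarrow> nat \<Rightarrow> nat \<Rightarrow> rmat" where
  "SM \<kappa> n p = (if \<kappa> = 1 then kron ident n (n - 1) (mtrans (Smat n))
                else kron ident n n (mtrans (Sper n)))"

definition DM :: "nat \<Rightarrow> nat \<Rightarrow> nat \<Rightarrow> rmat" where
  "DM \<kappa> n p = (if \<kappa> = 1 then kron ident n (n - 1) (mneg (mtrans (Dmat n)))
                else kron ident n n (mtrans (Dper n)))"

definition fbp :: "nat \<Rightarrow> nat \<Rightarrow> (nat \<Rightarrow> real) \<Rightarrow> (nat \<Rightarrow> real) \<Rightarrow> (nat \<Rightarrow> real)" where
  "fbp n p f0 f1 = (\<lambda>i. if i < n then f0 i / 2
                        else if (p - 1) * n \<le> i then f1 (i - (p - 1) * n) / 2 else 0)"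

definition fbm :: "nat \<Rightarrow> nat \<Rightarrow> (nat \<Rightarrow> real) \<Rightarrow> (nat \<Rightarrow> real) \<Rightarrow> (nat \<Rightarrow> real)" where
  "fbm n p f0 f1 = (\<lambda>i. if i < n then real p * f0 i
                        else if (p - 1) * n \<le> i then - (real p * f1 (i - (p - 1) * n)) else 0)"

definition Jc :: "real \<Rightarrow> real \<Rightarrow> ereal" where
  "Jc a b = (if b > 0 then ereal (a\<^sup>2 / (2 * b)) else if a = 0 \<and> b = 0 then 0 else \<infinity>)"

definition J1 :: "nat \<Rightarrow> (nat \<Rightarrow> real) \<Rightarrow> (nat \<Rightarrow> real) \<Rightarrow> ereal" where
  "J1 N u v = (\<Sum>i<N. Jc (u i) (v i))"

definition feasible :: "nat \<Rightarrow> nat \<Rightarrow> nat \<Rightarrow> (nat \<Rightarrow> real) \<Rightarrow> (nat \<Rightarrow> real)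
    \<Rightarrow> (nat \<Rightarrow> real) \<Rightarrow> (nat \<Rightarrow> real) \<Rightarrow> (nat \<Rightarrow> real) \<Rightarrow> (nat \<Rightarrow> real) \<Rightarrow> bool" where
  "feasible \<kappa> n p f0 f1 m f u v \<longleftrightarrow>
     (\<forall>i < n * p.
        mat_vec (SM \<kappa> n p) ((n - \<kappa>) * p) m i = u i \<and>
        mat_vec (SF n p) (n * (p - 1)) f i + fbp n p f0 f1 i = v i \<and>
        mat_vec (DM \<kappa> n p) ((n - \<kappa>) * p) m i + mat_vec (DF n p) (n * (p - 1)) f i
          = fbm n p f0 f1 i)"

end

theory Submission
  imports Defs "HOL-Analysis.Analysis"
begin

text \<open>The constraints decouple over time slices: on slice t they say that u and v are spatial
  and temporal averages of m and of the density, and that the discrete continuity equation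
  holds. Summing the continuity equation over space shows that every density slice has
  total mass \<Sum> f0. Finite cost forces v \<ge> 0 and u^2 \<le> 2 v J, so v is bounded by the mass,
  u by the cost, the densities by the recursion for v, and m by inverting the spatial averaging
  (Neumann case) or the averaging together with the continuity equation (periodic case).
  Hence sublevel sets of the feasible set are bounded; a minimising sequence has a convergent
  subsequence, the constraints are closed, and J is lower semicontinuous, so the limit is a
  minimiser. Feasibility itself comes from a momentum that moves f0 to f1 in the last step.\<close>

lemma block_index_less:
  fixes t x n p :: nat
  assumes "t < p" "x < n"
  shows "t*n + x < n*p"
proof -
  have "t*n + x < Suc t * n" using assms(2) by simp
  also have "\<dots> \<le> p * n" using assms(1) by (intro mult_le_mono1) simp
  finally show ?thesis by (simp add: mult.commute)
qed

lemma less_mult_blockE: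
  fixes i n p :: nat
  assumes "i < n*p"
  obtains t x where "t < p" "x < n" "i = t*n + x"
proof -
  have "0 < n" using assms by (cases n) auto
  then show ?thesis
    using that[of "i div n" "i mod n"] assms by (simp add: less_mult_imp_div_less mult.commute)
qed

lemma all_less_mult_iff:
  fixes n p :: nat
  shows "(\<forall>i<n*p. P i) \<longleftrightarrow> (\<forall>t<p. \<forall>x<n. P (t*n+x))"
proof safe
  fix t x assume "\<forall>i<n*p. P i" "t < p" "x < n"
  then show "P (t*n+x)" using block_index_less by blast
next
  fix i assume "\<forall>t<p. \<forall>x<n. P (t*n+x)" "i < n*p"
  then show "P i" by (metis less_mult_blockE)
qed

lemma block_index_cases:
  fixes t x n p :: nat
  assumes "x < n" "t < p"
  shows "t*n + x < n \<longleftrightarrow> t = 0" and "(p-1)*n \<le> t*n + x \<longleftrightarrow> t = p - 1"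
proof -
  show "t*n + x < n \<longleftrightarrow> t = 0" using assms(1) by (cases t) auto
  have "t*n + x < (p-1)*n" if "t < p - 1"
  proof -
    have "t*n + x < Suc t * n" using assms(1) by simp
    also have "\<dots> \<le> (p-1) * n" using that by (intro mult_le_mono1) simp
    finally show ?thesis .
  qed
  then show "(p-1)*n \<le> t*n + x \<longleftrightarrow> t = p - 1" using assms(2) by fastforce
qed

lemma sum_lessThan_mult_blocks:
  fixes g :: "nat \<Rightarrow> 'a::comm_monoid_add"
  shows "(\<Sum>j<c*p. g j) = (\<Sum>a<p. \<Sum>y<c. g (a*c+y))"
proof -
  have "(\<Sum>y<c. g (a*c+y)) = (\<Sum>j\<in>{a*c..<a*c+c}. g j)" for a
    by (simp add: sum.shift_bounds_nat_ivl[of g 0 "a*c" c, simplified] lessThan_atLeast0 add.commute)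
  then show ?thesis by (simp add: sum.nat_group mult.commute)
qed

section \<open>The constraints on one time slice\<close>

lemma mat_vec_kron_ident_left:
  assumes "x < r" "t < p"
  shows "mat_vec (kron ident r c B) (c*p) m (t*r+x) = mat_vec B c (\<lambda>y. m (t*c+y)) x"
proof -
  have "mat_vec (kron ident r c B) (c*p) m (t*r+x) = (\<Sum>a<p. \<Sum>y<c. ident t a * B x y * m (a*c+y))"
    unfolding mat_vec_def kron_def using assms by (simp add: sum_lessThan_mult_blocks)
  also have "\<dots> = (\<Sum>a<p. if a = t then (\<Sum>y<c. B x y * m (t*c+y)) else 0)"
    by (rule sum.cong) (auto simp: ident_def)
  finally show ?thesis using assms by (simp add: mat_vec_def)
qed

lemma mat_vec_kron_ident_right:
  assumes "x < n"
  shows "mat_vec (kron A n n ident) (n*q) f (t*n+x) = mat_vec A q (\<lambda>l. f (l*n+x)) t"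
proof -
  have "mat_vec (kron A n n ident) (n*q) f (t*n+x) = (\<Sum>l<q. \<Sum>y<n. A t l * ident x y * f (l*n+y))"
    unfolding mat_vec_def kron_def using assms by (simp add: sum_lessThan_mult_blocks)
  also have "\<dots> = (\<Sum>l<q. \<Sum>y<n. if y = x then A t l * f (l*n+x) else 0)"
    by (intro sum.cong) (auto simp: ident_def)
  finally show ?thesis using assms by (simp add: mat_vec_def)
qed

lemma mat_vec_Smat_transpose:
  fixes w :: "nat \<Rightarrow> real"
  assumes "x < k"
  shows "mat_vec (mtrans (Smat k)) (k-1) w x
    = (if x < k-1 then w x / 2 else 0) + (if 0 < x then w (x-1) / 2 else 0)"
proof -
  have "mat_vec (mtrans (Smat k)) (k-1) w x
      = (\<Sum>y<k-1. (if y = x then w y / 2 else 0) + (if y = x - 1 \<and> 0 < x then w y / 2 else 0))"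
    unfolding mat_vec_def mtrans_def Smat_def by (rule sum.cong) auto
  then show ?thesis using assms by (auto simp: sum.distrib)
qed

lemma mat_vec_neg_Dmat_transpose:
  fixes w :: "nat \<Rightarrow> real"
  assumes "x < k"
  shows "mat_vec (mneg (mtrans (Dmat k))) (k-1) w x
    = (if x < k-1 then real k * w x else 0) - (if 0 < x then real k * w (x-1) else 0)"
proof -
  have "mat_vec (mneg (mtrans (Dmat k))) (k-1) w x
      = (\<Sum>y<k-1. (if y = x then real k * w y else 0) - (if y = x - 1 \<and> 0 < x then real k * w y else 0))"
    unfolding mat_vec_def mtrans_def mneg_def Dmat_def by (rule sum.cong) auto
  then show ?thesis using assms by (auto simp: sum_subtractf)
qed

lemma mat_vec_Sper_transpose:
  fixes w :: "nat \<Rightarrow> real"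
  assumes "2 \<le> n" "x < n"
  shows "mat_vec (mtrans (Sper n)) n w x = (w x + w (Suc x mod n)) / 2"
proof -
  have "mat_vec (mtrans (Sper n)) n w x
      = (\<Sum>y<n. (if y = x then w y / 2 else 0) + (if y = Suc x mod n then w y / 2 else 0))"
    unfolding mat_vec_def mtrans_def
    by (rule sum.cong) (use assms in \<open>auto simp: Sper_def mod_Suc\<close>)
  then show ?thesis using assms by (simp add: sum.distrib add_divide_distrib)
qed

lemma mat_vec_Dper_transpose:
  fixes w :: "nat \<Rightarrow> real"
  assumes "2 \<le> n" "x < n"
  shows "mat_vec (mtrans (Dper n)) n w x = real n * w (Suc x mod n) - real n * w x"
proof -
  have "mat_vec (mtrans (Dper n)) n w x
      = (\<Sum>y<n. (if y = Suc x mod n then real n * w y else 0) - (if y = x then real n * w y else 0))"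
    unfolding mat_vec_def mtrans_def
    by (rule sum.cong) (use assms in \<open>auto simp: Dper_def mod_Suc\<close>)
  then show ?thesis using assms by (auto simp: sum_subtractf)
qed

lemma fbp_block:
  assumes "x < n" "t < p" "2 \<le> p"
  shows "fbp n p f0 f1 (t*n+x) = (if t = 0 then f0 x / 2 else if t = p - 1 then f1 x / 2 else 0)"
  using block_index_cases[OF assms(1,2)] assms by (auto simp: fbp_def)

lemma fbm_block:
  assumes "x < n" "t < p" "2 \<le> p"
  shows "fbm n p f0 f1 (t*n+x) = (if t = 0 then real p * f0 x else if t = p - 1 then - (real p * f1 x) else 0)"
  using block_index_cases[OF assms(1,2)] assms by (auto simp: fbm_def)

text \<open>One time slice of S_M m and D_M m, at spatial cell x: in the Neumann case the boundary
  momenta m(0) and m(n) are zero and not stored, in the periodic case indices wrap around.\<close>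

definition space_avg :: "nat \<Rightarrow> nat \<Rightarrow> (nat \<Rightarrow> real) \<Rightarrow> nat \<Rightarrow> real" where
  "space_avg \<kappa> n w x =
     (if \<kappa> = 1 then (if x < n-1 then w x / 2 else 0) + (if 0 < x then w (x-1) / 2 else 0)
      else (w x + w (Suc x mod n)) / 2)"

definition space_diff :: "nat \<Rightarrow> nat \<Rightarrow> (nat \<Rightarrow> real) \<Rightarrow> nat \<Rightarrow> real" where
  "space_diff \<kappa> n w x =
     (if \<kappa> = 1 then (if x < n-1 then real n * w x else 0) - (if 0 < x then real n * w (x-1) else 0)
      else real n * w (Suc x mod n) - real n * w x)"

definition density_at ::
    "nat \<Rightarrow> nat \<Rightarrow> (nat \<Rightarrow> real) \<Rightarrow> (nat \<Rightarrow> real) \<Rightarrow> (nat \<Rightarrow> real) \<Rightarrow> nat \<Rightarrow> nat \<Rightarrow> real" where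
  "density_at n p f0 f1 f t x = (if t = 0 then f0 x else if t = p then f1 x else f ((t-1)*n + x))"

lemma density_at_interior:
  assumes "j < n*(p-1)"
  shows "f j = density_at n p f0 f1 f (Suc (j div n)) (j mod n)"
proof -
  have "j div n < p - 1" using assms by (metis less_mult_imp_div_less mult.commute)
  then show ?thesis by (auto simp: density_at_def)
qed

lemma mat_vec_SM_block:
  assumes "2 \<le> n" "\<kappa> \<in> {0,1}" "t < p" "x < n"
  shows "mat_vec (SM \<kappa> n p) ((n-\<kappa>)*p) m (t*n+x) = space_avg \<kappa> n (\<lambda>y. m (t*(n-\<kappa>)+y)) x"
proof (cases "\<kappa> = 1")
  case True
  have "mat_vec (SM \<kappa> n p) ((n-\<kappa>)*p) m (t*n+x) = mat_vec (mtrans (Smat n)) (n-1) (\<lambda>y. m (t*(n-1)+y)) x"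
    using mat_vec_kron_ident_left[OF assms(4,3)] True by (simp add: SM_def)
  then show ?thesis using mat_vec_Smat_transpose[OF assms(4)] True by (simp add: space_avg_def)
next
  case False
  then have "\<kappa> = 0" using assms(2) by simp
  then show ?thesis
    using mat_vec_kron_ident_left[OF assms(4,3)] mat_vec_Sper_transpose[OF assms(1,4)]
    by (simp add: SM_def space_avg_def)
qed

lemma mat_vec_DM_block:
  assumes "2 \<le> n" "\<kappa> \<in> {0,1}" "t < p" "x < n"
  shows "mat_vec (DM \<kappa> n p) ((n-\<kappa>)*p) m (t*n+x) = space_diff \<kappa> n (\<lambda>y. m (t*(n-\<kappa>)+y)) x"
proof (cases "\<kappa> = 1")
  case True
  have "mat_vec (DM \<kappa> n p) ((n-\<kappa>)*p) m (t*n+x)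
      = mat_vec (mneg (mtrans (Dmat n))) (n-1) (\<lambda>y. m (t*(n-1)+y)) x"
    using mat_vec_kron_ident_left[OF assms(4,3)] True by (simp add: DM_def)
  then show ?thesis using mat_vec_neg_Dmat_transpose[OF assms(4)] True by (simp add: space_diff_def)
next
  case False
  then have "\<kappa> = 0" using assms(2) by simp
  then show ?thesis
    using mat_vec_kron_ident_left[OF assms(4,3)] mat_vec_Dper_transpose[OF assms(1,4)]
    by (simp add: DM_def space_diff_def)
qed

lemma mat_vec_SF_block:
  assumes "2 \<le> p" "t < p" "x < n"
  shows "mat_vec (SF n p) (n*(p-1)) f (t*n+x) + fbp n p f0 f1 (t*n+x)
    = (density_at n p f0 f1 f t x + density_at n p f0 f1 f (Suc t) x) / 2"
proof -
  have "mat_vec (SF n p) (n*(p-1)) f (t*n+x)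
      = (if t < p-1 then f (t*n+x) / 2 else 0) + (if 0 < t then f ((t-1)*n+x) / 2 else 0)"
    using mat_vec_Smat_transpose[OF assms(2)] assms(3) by (simp add: SF_def mat_vec_kron_ident_right)
  then show ?thesis unfolding fbp_block[OF assms(3,2,1)] density_at_def using assms by auto
qed

lemma mat_vec_DF_block:
  assumes "2 \<le> p" "t < p" "x < n"
  shows "mat_vec (DF n p) (n*(p-1)) f (t*n+x)
    = fbm n p f0 f1 (t*n+x) + real p * (density_at n p f0 f1 f (Suc t) x - density_at n p f0 f1 f t x)"
proof -
  have "mat_vec (DF n p) (n*(p-1)) f (t*n+x)
      = (if t < p-1 then real p * f (t*n+x) else 0) - (if 0 < t then real p * f ((t-1)*n+x) else 0)"
    using mat_vec_neg_Dmat_transpose[OF assms(2)] assms(3) by (simp add: DF_def mat_vec_kron_ident_right)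
  then show ?thesis unfolding fbm_block[OF assms(3,2,1)] density_at_def using assms
    by (auto simp: right_diff_distrib)
qed

lemma feasible_iff_blocks:
  fixes f0 f1 f :: "nat \<Rightarrow> real"
  assumes "2 \<le> n" "2 \<le> p" "\<kappa> \<in> {0,1}"
  defines "\<rho> \<equiv> density_at n p f0 f1 f"
  shows "feasible \<kappa> n p f0 f1 m f u v \<longleftrightarrow> (\<forall>t<p. \<forall>x<n.
      u (t*n+x) = space_avg \<kappa> n (\<lambda>y. m (t*(n-\<kappa>)+y)) x \<and>
      v (t*n+x) = (\<rho> t x + \<rho> (Suc t) x) / 2 \<and>
      space_diff \<kappa> n (\<lambda>y. m (t*(n-\<kappa>)+y)) x + real p * (\<rho> (Suc t) x - \<rho> t x) = 0)"
proof -
  have "(mat_vec (SM \<kappa> n p) ((n-\<kappa>)*p) m (t*n+x) = u (t*n+x) \<and>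
      mat_vec (SF n p) (n*(p-1)) f (t*n+x) + fbp n p f0 f1 (t*n+x) = v (t*n+x) \<and>
      mat_vec (DM \<kappa> n p) ((n-\<kappa>)*p) m (t*n+x) + mat_vec (DF n p) (n*(p-1)) f (t*n+x)
        = fbm n p f0 f1 (t*n+x))
    \<longleftrightarrow> (u (t*n+x) = space_avg \<kappa> n (\<lambda>y. m (t*(n-\<kappa>)+y)) x \<and>
      v (t*n+x) = (\<rho> t x + \<rho> (Suc t) x) / 2 \<and>
      space_diff \<kappa> n (\<lambda>y. m (t*(n-\<kappa>)+y)) x + real p * (\<rho> (Suc t) x - \<rho> t x) = 0)"
    if "t < p" "x < n" for t x
    unfolding mat_vec_SM_block[OF assms(1,3) that] mat_vec_DM_block[OF assms(1,3) that]
      mat_vec_SF_block[OF assms(2) that] mat_vec_DF_block[OF assms(2) that, of f f0 f1] \<rho>_def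
    by auto
  then show ?thesis unfolding feasible_def all_less_mult_iff[where n=n] by auto
qed

lemma feasibleD_blocks:
  assumes "feasible \<kappa> n p f0 f1 m f u v" "2 \<le> n" "2 \<le> p" "\<kappa> \<in> {0,1}" "t < p" "x < n"
  shows "u (t*n+x) = space_avg \<kappa> n (\<lambda>y. m (t*(n-\<kappa>)+y)) x"
    and "v (t*n+x) = (density_at n p f0 f1 f t x + density_at n p f0 f1 f (Suc t) x) / 2"
    and "space_diff \<kappa> n (\<lambda>y. m (t*(n-\<kappa>)+y)) x
      + real p * (density_at n p f0 f1 f (Suc t) x - density_at n p f0 f1 f t x) = 0"
  using assms(1,5,6) unfolding feasible_iff_blocks[OF assms(2-4)] by blast+

section \<open>Mass conservation and a feasible point\<close>

lemma space_diff_cong: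
  assumes "\<kappa> \<in> {0,1}" "x < n" "\<And>y. y < n - \<kappa> \<Longrightarrow> w y = w' y"
  shows "space_diff \<kappa> n w x = space_diff \<kappa> n w' x"
  using assms by (auto simp: space_diff_def)

lemma sum_space_diff:
  assumes "2 \<le> n" "\<kappa> \<in> {0,1}"
  shows "(\<Sum>x<n. space_diff \<kappa> n w x) = 0"
proof -
  obtain k where k: "n = Suc k" using assms(1) by (cases n) auto
  show ?thesis
  proof (cases "\<kappa> = 1")
    case True
    have "(\<Sum>x<Suc k. space_diff \<kappa> (Suc k) w x)
        = (\<Sum>x<Suc k. if x < k then real (Suc k) * w x else 0)
          - (\<Sum>x<Suc k. if 0 < x then real (Suc k) * w (x-1) else 0)"
      using True by (simp add: space_diff_def sum_subtractf)
    also have "(\<Sum>x<Suc k. if 0 < x then real (Suc k) * w (x-1) else 0) = (\<Sum>x<k. real (Suc k) * w x)"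
      by (simp only: sum.lessThan_Suc_shift) simp
    finally show ?thesis using k by (simp add: sum.lessThan_Suc)
  next
    case False
    have "(\<Sum>x<Suc k. w (Suc x mod Suc k)) = (\<Sum>x<k. w (Suc x)) + w 0"
      by (simp add: sum.lessThan_Suc)
    also have "\<dots> = (\<Sum>x<Suc k. w x)"
      by (subst sum.lessThan_Suc_shift) simp
    finally have "(\<Sum>x<Suc k. w (Suc x mod Suc k)) = (\<Sum>x<Suc k. w x)" .
    then show ?thesis using False k by (simp add: space_diff_def sum_subtractf flip: sum_distrib_left)
  qed
qed

lemma space_diff_surjective:
  fixes h :: "nat \<Rightarrow> real"
  assumes "2 \<le> n" "\<kappa> \<in> {0,1}" "(\<Sum>x<n. h x) = 0"
  obtains w where "\<And>x. x < n \<Longrightarrow> space_diff \<kappa> n w x = h x"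
proof -
  obtain k where k: "n = Suc k" and "0 < k" using assms(1) by (cases n) auto
  have last: "h k = - (\<Sum>z<k. h z)" using assms(3) k by simp
  have pos: "real n \<noteq> 0" using assms(1) by simp
  show ?thesis
  proof (cases "\<kappa> = 1")
    case True
    have "space_diff \<kappa> n (\<lambda>y. (\<Sum>z<Suc y. h z) / real n) x = h x" if "x < n" for x
    proof (cases "x < k")
      case True
      then show ?thesis using \<open>\<kappa> = 1\<close> k pos by (cases x) (auto simp: space_diff_def)
    next
      case False
      then have "x = k" using that k by simp
      moreover have "(\<Sum>z<Suc (k-1). h z) = (\<Sum>z<k. h z)" using \<open>0 < k\<close> by simp
      ultimately show ?thesis using \<open>\<kappa> = 1\<close> \<open>0 < k\<close> k last pos
        by (simp add: space_diff_def del: sum.lessThan_Suc)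
    qed
    then show ?thesis by (rule that)
  next
    case False
    have "space_diff \<kappa> n (\<lambda>y. (\<Sum>z<y. h z) / real n) x = h x" if "x < n" for x
      using that False k last pos by (auto simp: space_diff_def mod_Suc)
    then show ?thesis by (rule that)
  qed
qed

lemma feasible_nonempty:
  assumes "2 \<le> n" "2 \<le> p" "\<kappa> \<in> {0,1}" "(\<Sum>x<n. f0 x) = (\<Sum>x<n. f1 x)"
  shows "\<exists>m f u v. feasible \<kappa> n p f0 f1 m f u v"
proof -
  obtain w where w: "\<And>x. x < n \<Longrightarrow> space_diff \<kappa> n w x = real p * (f0 x - f1 x)"
    using space_diff_surjective[OF assms(1,3), of "\<lambda>x. real p * (f0 x - f1 x)"] assms(4)
    by (auto simp: sum_subtractf simp flip: sum_distrib_left)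
  define m where "m j = (if j div (n-\<kappa>) = p - 1 then w (j mod (n-\<kappa>)) else 0)" for j
  define f where "f j = f0 (j mod n)" for j
  define \<rho> where "\<rho> = density_at n p f0 f1 f"
  define u where "u i = space_avg \<kappa> n (\<lambda>y. m ((i div n)*(n-\<kappa>)+y)) (i mod n)" for i
  define v where "v i = (\<rho> (i div n) (i mod n) + \<rho> (Suc (i div n)) (i mod n)) / 2" for i
  have "space_diff \<kappa> n (\<lambda>y. m (t*(n-\<kappa>)+y)) x + real p * (\<rho> (Suc t) x - \<rho> t x) = 0"
    if "t < p" "x < n" for t x
  proof -
    have slice: "m (t*(n-\<kappa>)+y) = (if t = p - 1 then w y else 0)" if "y < n - \<kappa>" for y
      using that by (simp add: m_def)
    have \<rho>_eq: "\<rho> s x = (if s = p then f1 x else f0 x)" if "s \<le> p" for s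
      using that \<open>x < n\<close> assms(2) by (auto simp: \<rho>_def density_at_def f_def)
    show ?thesis
    proof (cases "t = p - 1")
      case True
      then have "space_diff \<kappa> n (\<lambda>y. m (t*(n-\<kappa>)+y)) x = space_diff \<kappa> n w x"
        using slice by (intro space_diff_cong[OF assms(3) \<open>x < n\<close>]) auto
      then show ?thesis using True w[OF \<open>x < n\<close>] \<rho>_eq[of t] \<rho>_eq[of "Suc t"] \<open>t < p\<close>
        by (auto simp: algebra_simps)
    next
      case False
      then have "space_diff \<kappa> n (\<lambda>y. m (t*(n-\<kappa>)+y)) x = space_diff \<kappa> n (\<lambda>_. 0) x"
        using slice by (intro space_diff_cong[OF assms(3) \<open>x < n\<close>]) auto
      moreover have "Suc t \<noteq> p" using False \<open>t < p\<close> by simp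
      ultimately show ?thesis using \<rho>_eq[of t] \<rho>_eq[of "Suc t"] \<open>t < p\<close> by (simp add: space_diff_def)
    qed
  qed
  then have "feasible \<kappa> n p f0 f1 m f u v"
    unfolding feasible_iff_blocks[OF assms(1-3)] \<rho>_def[symmetric] by (simp add: u_def v_def)
  then show ?thesis by blast
qed

lemma feasible_mass_conserved:
  assumes "feasible \<kappa> n p f0 f1 m f u v" "2 \<le> n" "2 \<le> p" "\<kappa> \<in> {0,1}" "t \<le> p"
  shows "(\<Sum>x<n. density_at n p f0 f1 f t x) = (\<Sum>x<n. f0 x)"
  using assms(5)
proof (induction t)
  case 0
  then show ?case by (simp add: density_at_def)
next
  case (Suc t)
  let ?\<rho> = "density_at n p f0 f1 f"
  have "space_diff \<kappa> n (\<lambda>y. m (t*(n-\<kappa>)+y)) x + real p * (?\<rho> (Suc t) x - ?\<rho> t x) = 0" if "x < n" for x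
    using feasibleD_blocks(3)[OF assms(1-4) _ that] Suc.prems by simp
  then have "(\<Sum>x<n. space_diff \<kappa> n (\<lambda>y. m (t*(n-\<kappa>)+y)) x + real p * (?\<rho> (Suc t) x - ?\<rho> t x)) = 0"
    by (intro sum.neutral) auto
  then have "(\<Sum>x<n. space_diff \<kappa> n (\<lambda>y. m (t*(n-\<kappa>)+y)) x)
      + real p * ((\<Sum>x<n. ?\<rho> (Suc t) x) - (\<Sum>x<n. ?\<rho> t x)) = 0"
    by (simp add: sum.distrib sum_subtractf flip: sum_distrib_left)
  then show ?case using sum_space_diff[OF assms(2,4)] Suc assms(3) by simp
qed

section \<open>Bounded sublevel sets\<close>

lemma Jc_nonneg: "0 \<le> Jc a b"
  by (simp add: Jc_def)

lemma Jc_le_ereal_iff: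
  assumes "0 \<le> C"
  shows "Jc a b \<le> ereal C \<longleftrightarrow> 0 \<le> b \<and> a\<^sup>2 \<le> 2 * b * C"
proof (cases "0 < b")
  case True
  then show ?thesis by (simp add: Jc_def pos_divide_le_eq mult.commute)
next
  case False
  then show ?thesis using assms by (auto simp: Jc_def)
qed

lemma J1_nonneg: "0 \<le> J1 N u v"
  unfolding J1_def by (intro sum_nonneg) (simp add: Jc_nonneg)

lemma Jc_le_J1:
  assumes "i < N"
  shows "Jc (u i) (v i) \<le> J1 N u v"
proof -
  have "J1 N u v = Jc (u i) (v i) + (\<Sum>j\<in>{..<N} - {i}. Jc (u j) (v j))"
    unfolding J1_def using assms by (simp add: sum.remove)
  moreover have "0 \<le> (\<Sum>j\<in>{..<N} - {i}. Jc (u j) (v j))" by (intro sum_nonneg) (simp add: Jc_nonneg)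
  ultimately show ?thesis by (simp add: add_increasing2)
qed

lemma J1_le_ereal_D:
  assumes "J1 N u v \<le> ereal C" "0 \<le> C" "i < N"
  shows "0 \<le> v i" and "(u i)\<^sup>2 \<le> 2 * v i * C"
proof -
  have "Jc (u i) (v i) \<le> ereal C" using Jc_le_J1[OF assms(3), of u v] assms(1) by (rule order_trans)
  then show "0 \<le> v i" "(u i)\<^sup>2 \<le> 2 * v i * C" unfolding Jc_le_ereal_iff[OF assms(2)] by simp_all
qed

lemma space_slice_bound:
  assumes "2 \<le> n" "\<kappa> \<in> {0,1}" "y < n - \<kappa>"
    and avg: "\<And>x. x < n \<Longrightarrow> \<bar>space_avg \<kappa> n w x\<bar> \<le> A"
    and diff: "\<And>x. x < n \<Longrightarrow> \<bar>space_diff \<kappa> n w x\<bar> \<le> D"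
  shows "\<bar>w y\<bar> \<le> 2 * real n * A + D"
proof -
  have A: "0 \<le> A" and D: "0 \<le> D" using avg[of 0] diff[of 0] assms(1) by auto
  show ?thesis
  proof (cases "\<kappa> = 1")
    case True
    have "\<bar>w y\<bar> \<le> 2 * (real y + 1) * A" if "y < n - 1" for y
      using that
    proof (induction y)
      case 0
      then show ?case using avg[of 0] True by (simp add: space_avg_def)
    next
      case (Suc y)
      have "w (Suc y) = 2 * space_avg \<kappa> n w (Suc y) - w y"
        using Suc.prems True by (simp add: space_avg_def)
      moreover have "\<bar>space_avg \<kappa> n w (Suc y)\<bar> \<le> A" using avg Suc.prems by simp
      ultimately show ?case using Suc by (auto simp: abs_le_iff algebra_simps)
    qed
    moreover have "2 * (real y + 1) * A \<le> 2 * real n * A"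
      using assms(3) A by (intro mult_right_mono) auto
    ultimately show ?thesis using assms(3) True D by fastforce
  next
    case False
    then have "\<kappa> = 0" using assms(2) by simp
    have y: "y < n" using assms(3) by simp
    then have "w y = space_avg \<kappa> n w y - space_diff \<kappa> n w y / (2 * real n)"
      using \<open>\<kappa> = 0\<close> assms(1) by (simp add: space_avg_def space_diff_def field_simps)
    moreover have "\<bar>space_diff \<kappa> n w y / (2 * real n)\<bar> \<le> D"
    proof -
      have "D \<le> D * (2 * real n)" using D assms(1) by (simp add: mult_le_cancel_left1)
      then show ?thesis using diff[OF y] assms(1) by (simp add: abs_divide divide_le_eq)
    qed
    moreover have "A \<le> 2 * real n * A" using assms(1) A by (simp add: mult_le_cancel_right1)
    ultimately show ?thesis using avg[OF y] by linarith
  qed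
qed

lemma feasible_v_le_mass:
  assumes feas: "feasible \<kappa> n p f0 f1 m f u v" and "2 \<le> n" "2 \<le> p" "\<kappa> \<in> {0,1}"
    and v: "\<forall>i<n*p. 0 \<le> v i" and "t < p" "x < n"
  shows "v (t*n+x) \<le> (\<Sum>y<n. f0 y)"
proof -
  let ?\<rho> = "density_at n p f0 f1 f"
  have "v (t*n+x) \<le> (\<Sum>y<n. v (t*n+y))"
    using v block_index_less[OF \<open>t < p\<close>] \<open>x < n\<close> by (intro member_le_sum) auto
  also have "\<dots> = (\<Sum>y<n. (?\<rho> t y + ?\<rho> (Suc t) y) / 2)"
    by (rule sum.cong) (use feasibleD_blocks(2)[OF assms(1-4) \<open>t < p\<close>] in auto)
  also have "\<dots> = ((\<Sum>y<n. ?\<rho> t y) + (\<Sum>y<n. ?\<rho> (Suc t) y)) / 2"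
    by (simp add: sum.distrib flip: sum_divide_distrib)
  also have "\<dots> = (\<Sum>y<n. f0 y)"
    using feasible_mass_conserved[OF assms(1-4)] \<open>t < p\<close> by simp
  finally show ?thesis .
qed

lemma feasible_density_bound:
  assumes feas: "feasible \<kappa> n p f0 f1 m f u v" and "2 \<le> n" "2 \<le> p" "\<kappa> \<in> {0,1}"
    and f0: "\<forall>x<n. 0 \<le> f0 x" and v: "\<forall>i<n*p. 0 \<le> v i" and "t \<le> p" "x < n"
  shows "\<bar>density_at n p f0 f1 f t x\<bar> \<le> (2 * real t + 1) * (\<Sum>y<n. f0 y)"
  using \<open>t \<le> p\<close>
proof (induction t)
  case 0
  have "f0 x \<le> (\<Sum>y<n. f0 y)" using f0 \<open>x < n\<close> by (intro member_le_sum) auto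
  then show ?case using f0 \<open>x < n\<close> by (simp add: density_at_def)
next
  case (Suc t)
  then have "t < p" by simp
  have "density_at n p f0 f1 f (Suc t) x = 2 * v (t*n+x) - density_at n p f0 f1 f t x"
    using feasibleD_blocks(2)[OF assms(1-4) \<open>t < p\<close> \<open>x < n\<close>] by simp
  moreover have "0 \<le> v (t*n+x)" using v block_index_less[OF \<open>t < p\<close> \<open>x < n\<close>] by simp
  moreover have "v (t*n+x) \<le> (\<Sum>y<n. f0 y)"
    using feasible_v_le_mass[OF assms(1-4) v \<open>t < p\<close> \<open>x < n\<close>] .
  ultimately show ?case using Suc by (auto simp: abs_le_iff algebra_simps)
qed

lemma feasible_momentum_bound:
  assumes feas: "feasible \<kappa> n p f0 f1 m f u v" and "2 \<le> n" "2 \<le> p" "\<kappa> \<in> {0,1}"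
    and u: "\<forall>i<n*p. \<bar>u i\<bar> \<le> A"
    and \<rho>: "\<And>t x. t \<le> p \<Longrightarrow> x < n \<Longrightarrow> \<bar>density_at n p f0 f1 f t x\<bar> \<le> R"
    and j: "j < (n-\<kappa>)*p"
  shows "\<bar>m j\<bar> \<le> 2 * real n * A + 2 * real p * R"
proof -
  let ?\<rho> = "density_at n p f0 f1 f"
  obtain t y where t: "t < p" and y: "y < n - \<kappa>" and j_eq: "j = t*(n-\<kappa>) + y"
    using j by (rule less_mult_blockE)
  have "\<bar>space_diff \<kappa> n (\<lambda>y. m (t*(n-\<kappa>)+y)) x\<bar> \<le> 2 * real p * R" if "x < n" for x
  proof -
    have "\<bar>space_diff \<kappa> n (\<lambda>y. m (t*(n-\<kappa>)+y)) x\<bar> = real p * \<bar>?\<rho> (Suc t) x - ?\<rho> t x\<bar>"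
      using feasibleD_blocks(3)[OF assms(1-4) t that] by (simp add: abs_mult add_eq_0_iff2)
    also have "\<dots> \<le> real p * (2 * R)"
      using \<rho>[of "Suc t" x] \<rho>[of t x] t that by (intro mult_left_mono) auto
    finally show ?thesis by simp
  qed
  moreover have "\<bar>space_avg \<kappa> n (\<lambda>y. m (t*(n-\<kappa>)+y)) x\<bar> \<le> A" if "x < n" for x
    by (metis feasibleD_blocks(1)[OF assms(1-4) t that] u block_index_less[OF t that])
  ultimately show ?thesis
    using space_slice_bound[OF assms(2,4) y, of "\<lambda>y. m (t*(n-\<kappa>)+y)"] j_eq by simp
qed

lemma feasible_flux_bound:
  assumes feas: "feasible \<kappa> n p f0 f1 m f u v" and "2 \<le> n" "2 \<le> p" "\<kappa> \<in> {0,1}"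
    and C: "0 \<le> C" and J: "J1 (n*p) u v \<le> ereal C" and i: "i < n*p"
  shows "\<bar>u i\<bar> \<le> sqrt (2 * (\<Sum>x<n. f0 x) * C)"
proof -
  obtain t x where "t < p" "x < n" "i = t*n + x" using i by (rule less_mult_blockE)
  then have "v i \<le> (\<Sum>x<n. f0 x)"
    using feasible_v_le_mass[OF feas assms(2-4) _ \<open>t < p\<close> \<open>x < n\<close>] J1_le_ereal_D(1)[OF J C] by simp
  then have "2 * v i * C \<le> 2 * (\<Sum>x<n. f0 x) * C" using C by (intro mult_right_mono) auto
  with J1_le_ereal_D(2)[OF J C i] have "(u i)\<^sup>2 \<le> 2 * (\<Sum>x<n. f0 x) * C" by (rule order_trans)
  then show ?thesis using real_sqrt_le_mono by fastforce
qed

lemma feasible_sublevel_bounded: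
  assumes "2 \<le> n" "2 \<le> p" "\<kappa> \<in> {0,1}" "\<forall>x<n. 0 \<le> f0 x" "0 \<le> C"
  obtains B where
    "\<And>m f u v j. feasible \<kappa> n p f0 f1 m f u v \<Longrightarrow> J1 (n*p) u v \<le> ereal C \<Longrightarrow>
      j < (n-\<kappa>)*p \<Longrightarrow> \<bar>m j\<bar> \<le> B"
    "\<And>m f u v j. feasible \<kappa> n p f0 f1 m f u v \<Longrightarrow> J1 (n*p) u v \<le> ereal C \<Longrightarrow>
      j < n*(p-1) \<Longrightarrow> \<bar>f j\<bar> \<le> B"
proof -
  define M where "M = (\<Sum>x<n. f0 x)"
  define A where "A = sqrt (2 * M * C)"
  define R where "R = (2 * real p + 1) * M"
  have "0 \<le> M" unfolding M_def using assms(4) by (intro sum_nonneg) auto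
  then have "0 \<le> A" "0 \<le> R" unfolding A_def R_def using assms(5) by simp_all
  have \<rho>: "\<bar>density_at n p f0 f1 f t x\<bar> \<le> R"
    if feas: "feasible \<kappa> n p f0 f1 m f u v" and J: "J1 (n*p) u v \<le> ereal C" and "t \<le> p" "x < n"
    for m f u v t x
  proof -
    have "\<bar>density_at n p f0 f1 f t x\<bar> \<le> (2 * real t + 1) * M"
      unfolding M_def using feasible_density_bound[OF feas assms(1-4)] J1_le_ereal_D(1)[OF J assms(5)] that
      by blast
    also have "\<dots> \<le> R" unfolding R_def using \<open>t \<le> p\<close> \<open>0 \<le> M\<close> by (intro mult_right_mono) auto
    finally show ?thesis .
  qed
  show ?thesis
  proof (rule that[of "2 * real n * A + 2 * real p * R + R"])
    fix m f u v j
    assume feas: "feasible \<kappa> n p f0 f1 m f u v" and J: "J1 (n*p) u v \<le> ereal C" and j: "j < (n-\<kappa>)*p"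
    have "\<forall>i<n*p. \<bar>u i\<bar> \<le> A"
      unfolding A_def M_def using feasible_flux_bound[OF feas assms(1-3,5) J] by blast
    then have "\<bar>m j\<bar> \<le> 2 * real n * A + 2 * real p * R"
      using feasible_momentum_bound[OF feas assms(1-3) _ \<rho>[OF feas J] j] by blast
    then show "\<bar>m j\<bar> \<le> 2 * real n * A + 2 * real p * R + R" using \<open>0 \<le> R\<close> by linarith
  next
    fix m f u v j
    assume feas: "feasible \<kappa> n p f0 f1 m f u v" and J: "J1 (n*p) u v \<le> ereal C" and j: "j < n*(p-1)"
    have "j div n < p - 1" using j by (metis less_mult_imp_div_less mult.commute)
    then have "\<bar>f j\<bar> \<le> R"
      using \<rho>[OF feas J, of "Suc (j div n)" "j mod n"] density_at_interior[OF j, of f f0 f1] assms(1)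
      by simp
    moreover have "0 \<le> 2 * real n * A + 2 * real p * R" using \<open>0 \<le> A\<close> \<open>0 \<le> R\<close> by simp
    ultimately show "\<bar>f j\<bar> \<le> 2 * real n * A + 2 * real p * R + R" by linarith
  qed
qed

section \<open>Existence of a minimiser\<close>

lemma convergent_subseq_finite_coords:
  fixes X :: "nat \<Rightarrow> 'i \<Rightarrow> 'a::heine_borel"
  assumes "finite I" "\<And>i. i \<in> I \<Longrightarrow> bounded (range (\<lambda>k. X k i))"
  shows "\<exists>r y. strict_mono r \<and> (\<forall>i\<in>I. (\<lambda>k. X (r k) i) \<longlonglongrightarrow> y i)"
  using assms
proof (induction I rule: finite_induct)
  case empty
  have "strict_mono (id :: nat \<Rightarrow> nat)" by (simp add: strict_mono_def)
  then show ?case by blast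
next
  case (insert i I)
  then obtain r y where r: "strict_mono r" and y: "\<forall>j\<in>I. (\<lambda>k. X (r k) j) \<longlonglongrightarrow> y j"
    by blast
  have "bounded (range (\<lambda>k. X (r k) i))"
    using insert.prems[of i] by (rule bounded_subset) auto
  then obtain l q where q: "strict_mono q" and l: "((\<lambda>k. X (r k) i) \<circ> q) \<longlonglongrightarrow> l"
    using bounded_imp_convergent_subsequence by blast
  have "(\<lambda>k. X ((r \<circ> q) k) j) \<longlonglongrightarrow> (y(i := l)) j" if "j \<in> insert i I" for j
  proof (cases "j = i")
    case True
    then show ?thesis using l by (simp add: comp_def)
  next
    case False
    then have "((\<lambda>k. X (r k) j) \<circ> q) \<longlonglongrightarrow> y j" using that y q LIMSEQ_subseq_LIMSEQ by auto
    then show ?thesis using False by (simp add: comp_def)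
  qed
  moreover have "strict_mono (r \<circ> q)" using r q by (rule strict_mono_o)
  ultimately show ?case by blast
qed

lemma tendsto_mat_vec:
  assumes "\<And>j. j < N \<Longrightarrow> (\<lambda>k. X k j) \<longlonglongrightarrow> Y j"
  shows "(\<lambda>k. mat_vec A N (X k) i) \<longlonglongrightarrow> mat_vec A N Y i"
  unfolding mat_vec_def using assms by (intro tendsto_sum tendsto_mult tendsto_const) auto

lemma feasible_limit:
  assumes feas: "\<And>k. feasible \<kappa> n p f0 f1 (M k) (F k) (U k) (V k)"
    and M: "\<And>j. j < (n-\<kappa>)*p \<Longrightarrow> (\<lambda>k. M k j) \<longlonglongrightarrow> m j"
    and F: "\<And>j. j < n*(p-1) \<Longrightarrow> (\<lambda>k. F k j) \<longlonglongrightarrow> f j"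
  obtains u v where "feasible \<kappa> n p f0 f1 m f u v"
    "\<And>i. i < n*p \<Longrightarrow> (\<lambda>k. U k i) \<longlonglongrightarrow> u i"
    "\<And>i. i < n*p \<Longrightarrow> (\<lambda>k. V k i) \<longlonglongrightarrow> v i"
proof
  let ?u = "mat_vec (SM \<kappa> n p) ((n-\<kappa>)*p) m"
  let ?v = "\<lambda>i. mat_vec (SF n p) (n*(p-1)) f i + fbp n p f0 f1 i"
  fix i assume i: "i < n*p"
  note eqs = feas[unfolded feasible_def, rule_format, OF i]
  have "(\<lambda>k. mat_vec (SM \<kappa> n p) ((n-\<kappa>)*p) (M k) i) \<longlonglongrightarrow> ?u i"
    by (rule tendsto_mat_vec) (rule M)
  then show "(\<lambda>k. U k i) \<longlonglongrightarrow> ?u i" using eqs by simp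
  have "(\<lambda>k. mat_vec (SF n p) (n*(p-1)) (F k) i + fbp n p f0 f1 i) \<longlonglongrightarrow> ?v i"
    by (intro tendsto_add tendsto_const tendsto_mat_vec F)
  then show "(\<lambda>k. V k i) \<longlonglongrightarrow> ?v i" using eqs by simp
next
  show "feasible \<kappa> n p f0 f1 m f (mat_vec (SM \<kappa> n p) ((n-\<kappa>)*p) m)
      (\<lambda>i. mat_vec (SF n p) (n*(p-1)) f i + fbp n p f0 f1 i)"
    unfolding feasible_def
  proof (intro allI impI conjI refl)
    fix i assume i: "i < n*p"
    have "(\<lambda>k. mat_vec (DM \<kappa> n p) ((n-\<kappa>)*p) (M k) i + mat_vec (DF n p) (n*(p-1)) (F k) i)
        \<longlonglongrightarrow> mat_vec (DM \<kappa> n p) ((n-\<kappa>)*p) m i + mat_vec (DF n p) (n*(p-1)) f i"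
      by (intro tendsto_add tendsto_mat_vec M F)
    moreover have "mat_vec (DM \<kappa> n p) ((n-\<kappa>)*p) (M k) i + mat_vec (DF n p) (n*(p-1)) (F k) i
        = fbm n p f0 f1 i" for k
      using feas[of k] i unfolding feasible_def by blast
    ultimately have "(\<lambda>k. fbm n p f0 f1 i)
        \<longlonglongrightarrow> mat_vec (DM \<kappa> n p) ((n-\<kappa>)*p) m i + mat_vec (DF n p) (n*(p-1)) f i"
      by simp
    from LIMSEQ_unique[OF tendsto_const this]
    show "mat_vec (DM \<kappa> n p) ((n-\<kappa>)*p) m i + mat_vec (DF n p) (n*(p-1)) f i = fbm n p f0 f1 i"
      by simp
  qed
qed

lemma Jc_le_limit:
  assumes "U \<longlonglongrightarrow> a" "V \<longlonglongrightarrow> b" "T \<longlonglongrightarrow> t" "\<And>k. Jc (U k) (V k) \<le> ereal (T k)"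
  shows "Jc a b \<le> ereal t"
proof -
  have T: "0 \<le> T k" for k using order_trans[OF Jc_nonneg assms(4)] by (simp add: zero_ereal_def)
  then have "0 \<le> t" using assms(3) by (intro LIMSEQ_le_const) auto
  moreover have VU: "0 \<le> V k \<and> (U k)\<^sup>2 \<le> 2 * V k * T k" for k
    using assms(4) Jc_le_ereal_iff[OF T] by blast
  then have "0 \<le> b" using assms(2) by (intro LIMSEQ_le_const) auto
  moreover have "a\<^sup>2 \<le> 2 * b * t"
  proof (rule LIMSEQ_le)
    show "(\<lambda>k. (U k)\<^sup>2) \<longlonglongrightarrow> a\<^sup>2" using assms(1) by (rule tendsto_power)
    show "(\<lambda>k. 2 * V k * T k) \<longlonglongrightarrow> 2 * b * t" using assms(2,3) by (intro tendsto_intros)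
  qed (use VU in auto)
  ultimately show ?thesis by (simp add: Jc_le_ereal_iff)
qed

lemma J1_lower_semicontinuous:
  assumes U: "\<And>i. i < N \<Longrightarrow> (\<lambda>k. U k i) \<longlonglongrightarrow> u i"
    and V: "\<And>i. i < N \<Longrightarrow> (\<lambda>k. V k i) \<longlonglongrightarrow> v i"
    and J: "\<And>k. J1 N (U k) (V k) \<le> ereal (a k)" and a: "a \<longlonglongrightarrow> c"
  shows "J1 N u v \<le> ereal c"
proof -
  obtain B where B: "\<And>k. \<bar>a k\<bar> \<le> B"
    using convergent_imp_bounded[OF a] by (auto simp: bounded_real)
  define T where "T k i = real_of_ereal (Jc (U k i) (V k i))" for k i
  have TJ: "Jc (U k i) (V k i) = ereal (T k i)" and T: "\<bar>T k i\<bar> \<le> B" if "i < N" for k i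
  proof -
    have "Jc (U k i) (V k i) \<le> ereal B"
      using Jc_le_J1[OF that] J[of k] B[of k] by (meson abs_le_D1 ereal_less_eq(3) order_trans)
    then show "Jc (U k i) (V k i) = ereal (T k i)" "\<bar>T k i\<bar> \<le> B"
      using Jc_nonneg[of "U k i" "V k i"] unfolding T_def
      by (cases "Jc (U k i) (V k i)"; simp)+
  qed
  obtain r t where r: "strict_mono r" and t: "\<forall>i\<in>{..<N}. (\<lambda>k. T (r k) i) \<longlonglongrightarrow> t i"
    using convergent_subseq_finite_coords[of "{..<N}" T] T by (force simp: bounded_real)
  have "Jc (u i) (v i) \<le> ereal (t i)" if "i < N" for i
  proof (rule Jc_le_limit)
    show "(\<lambda>k. U (r k) i) \<longlonglongrightarrow> u i" "(\<lambda>k. V (r k) i) \<longlonglongrightarrow> v i"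
      using LIMSEQ_subseq_LIMSEQ[OF U[OF that] r] LIMSEQ_subseq_LIMSEQ[OF V[OF that] r]
      by (simp_all add: comp_def)
    show "(\<lambda>k. T (r k) i) \<longlonglongrightarrow> t i" using t that by simp
    show "Jc (U (r k) i) (V (r k) i) \<le> ereal (T (r k) i)" for k using TJ[OF that] by simp
  qed
  then have "J1 N u v \<le> ereal (\<Sum>i<N. t i)"
    unfolding J1_def sum_ereal[symmetric] by (intro sum_mono) simp
  also have "(\<Sum>i<N. t i) \<le> c"
  proof (rule LIMSEQ_le)
    show "(\<lambda>k. \<Sum>i<N. T (r k) i) \<longlonglongrightarrow> (\<Sum>i<N. t i)" using t by (intro tendsto_sum) auto
    show "(\<lambda>k. a (r k)) \<longlonglongrightarrow> c" using LIMSEQ_subseq_LIMSEQ[OF a r] by (simp add: comp_def)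
    have "ereal (\<Sum>i<N. T k i) = J1 N (U k) (V k)" for k
      unfolding J1_def sum_ereal[symmetric] by (simp add: TJ)
    then show "\<exists>M. \<forall>k\<ge>M. (\<Sum>i<N. T (r k) i) \<le> a (r k)" using J by (metis ereal_less_eq(3))
  qed
  finally show ?thesis by simp
qed

lemma feasible_minimizing_limit:
  assumes "2 \<le> n" "2 \<le> p" "\<kappa> \<in> {0,1}" "\<forall>x<n. 0 \<le> f0 x"
    and feas: "\<And>k. feasible \<kappa> n p f0 f1 (M k) (F k) (U k) (V k)"
    and J: "\<And>k. J1 (n*p) (U k) (V k) \<le> ereal (a k)" and a: "a \<longlonglongrightarrow> c"
  shows "\<exists>m f u v. feasible \<kappa> n p f0 f1 m f u v \<and> J1 (n*p) u v \<le> ereal c"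
proof -
  obtain C where C: "\<And>k. \<bar>a k\<bar> \<le> C"
    using convergent_imp_bounded[OF a] by (auto simp: bounded_real)
  then have "0 \<le> C" by (meson abs_ge_zero order_trans)
  then obtain B where
    Bm: "\<And>m f u v j. feasible \<kappa> n p f0 f1 m f u v \<Longrightarrow> J1 (n*p) u v \<le> ereal C \<Longrightarrow>
      j < (n-\<kappa>)*p \<Longrightarrow> \<bar>m j\<bar> \<le> B" and
    Bf: "\<And>m f u v j. feasible \<kappa> n p f0 f1 m f u v \<Longrightarrow> J1 (n*p) u v \<le> ereal C \<Longrightarrow>
      j < n*(p-1) \<Longrightarrow> \<bar>f j\<bar> \<le> B"
    using feasible_sublevel_bounded[OF assms(1-4)] by blast
  have JC: "J1 (n*p) (U k) (V k) \<le> ereal C" for k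
    using J[of k] C[of k] by (meson abs_le_D1 ereal_less_eq(3) order_trans)
  define I where "I = Inl ` {..<(n-\<kappa>)*p} \<union> Inr ` {..<n*(p-1)}"
  define X where "X k = case_sum (M k) (F k)" for k
  have XB: "\<bar>X k i\<bar> \<le> B" if "i \<in> I" for k i
    using that Bm[OF feas JC] Bf[OF feas JC] by (auto simp: I_def X_def)
  have "bounded (range (\<lambda>k. X k i))" if "i \<in> I" for i
    unfolding bounded_real using XB[OF that] by blast
  moreover have "finite I" by (simp add: I_def)
  ultimately obtain r y where r: "strict_mono r" and y: "\<forall>i\<in>I. (\<lambda>k. X (r k) i) \<longlonglongrightarrow> y i"
    using convergent_subseq_finite_coords by blast
  have Mlim: "(\<lambda>k. M (r k) j) \<longlonglongrightarrow> y (Inl j)" if "j < (n-\<kappa>)*p" for j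
    using y[rule_format, of "Inl j"] that by (simp add: I_def X_def)
  have Flim: "(\<lambda>k. F (r k) j) \<longlonglongrightarrow> y (Inr j)" if "j < n*(p-1)" for j
    using y[rule_format, of "Inr j"] that by (simp add: I_def X_def)
  obtain u v where lim: "feasible \<kappa> n p f0 f1 (\<lambda>j. y (Inl j)) (\<lambda>j. y (Inr j)) u v"
    and U: "\<And>i. i < n*p \<Longrightarrow> (\<lambda>k. U (r k) i) \<longlonglongrightarrow> u i"
    and V: "\<And>i. i < n*p \<Longrightarrow> (\<lambda>k. V (r k) i) \<longlonglongrightarrow> v i"
    using feasible_limit[where U="\<lambda>k. U (r k)" and V="\<lambda>k. V (r k)", OF feas Mlim Flim] by blast
  have "J1 (n*p) u v \<le> ereal c"
    using J1_lower_semicontinuous[OF U V _ LIMSEQ_subseq_LIMSEQ[OF a r]] J by (simp add: comp_def)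
  with lim show ?thesis by blast
qed

lemma ereal_minimum_attained:
  fixes J :: "'a \<Rightarrow> ereal"
  assumes "P x0" and nonneg: "\<And>x. P x \<Longrightarrow> 0 \<le> J x"
    and lim: "\<And>X a c. (\<And>k. P (X k)) \<Longrightarrow> (\<And>k. J (X k) \<le> ereal (a k)) \<Longrightarrow> a \<longlonglongrightarrow> c
      \<Longrightarrow> \<exists>x. P x \<and> J x \<le> ereal c"
  shows "\<exists>x. P x \<and> (\<forall>y. P y \<longrightarrow> J x \<le> J y)"
proof -
  define c where "c = (INF x\<in>{x. P x}. J x)"
  have c_le: "c \<le> J y" if "P y" for y unfolding c_def using that by (simp add: INF_lower)
  show ?thesis
  proof (cases "c = \<infinity>")
    case True
    then have "J x0 \<le> J y" if "P y" for y using c_le[OF that] by simp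
    then show ?thesis using \<open>P x0\<close> by blast
  next
    case False
    moreover have "0 \<le> c" unfolding c_def using nonneg by (simp add: le_INF_iff)
    ultimately obtain r where r: "c = ereal r" by (cases c) auto
    have "\<exists>x. P x \<and> J x \<le> ereal (r + inverse (real (Suc k)))" for k
    proof -
      have "c < ereal (r + inverse (real (Suc k)))" using r by simp
      then show ?thesis unfolding c_def INF_less_iff by (auto intro: less_imp_le)
    qed
    then obtain X where "\<And>k. P (X k) \<and> J (X k) \<le> ereal (r + inverse (real (Suc k)))" by metis
    moreover have "(\<lambda>k. r + inverse (real (Suc k))) \<longlonglongrightarrow> r"
      using tendsto_add[OF tendsto_const LIMSEQ_inverse_real_of_nat] by simp
    ultimately obtain x where "P x" "J x \<le> ereal r" using lim by meson
    then show ?thesis using c_le r by (metis order_trans)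
  qed
qed

theorem proposition1:
  fixes n p \<kappa> :: nat and f0 f1 :: "nat \<Rightarrow> real"
  assumes "n \<ge> 2" and "p \<ge> 2" and "\<kappa> \<in> {0, 1}"
    and "\<forall>i < n. f0 i \<ge> 0" and "\<forall>i < n. f1 i \<ge> 0"
    and "(\<Sum>i<n. \<bar>f0 i\<bar>) = (\<Sum>i<n. \<bar>f1 i\<bar>)"
  shows "\<exists>m f u v. feasible \<kappa> n p f0 f1 m f u v \<and>
           (\<forall>m' f' u' v'. feasible \<kappa> n p f0 f1 m' f' u' v' \<longrightarrow>
                J1 (n * p) u v \<le> J1 (n * p) u' v')"
proof -
  let ?P = "\<lambda>(m, f, u, v). feasible \<kappa> n p f0 f1 m f u v"
  let ?J = "\<lambda>(m :: nat \<Rightarrow> real, f :: nat \<Rightarrow> real, u, v). J1 (n * p) u v"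
  have "(\<Sum>i<n. f0 i) = (\<Sum>i<n. f1 i)" using assms(4-6) by simp
  then obtain m0 g0 u0 v0 where "feasible \<kappa> n p f0 f1 m0 g0 u0 v0"
    using feasible_nonempty[OF assms(1-3)] by blast
  have "\<exists>x. ?P x \<and> (\<forall>y. ?P y \<longrightarrow> ?J x \<le> ?J y)"
  proof (rule ereal_minimum_attained)
    show "?P (m0, g0, u0, v0)" using \<open>feasible \<kappa> n p f0 f1 m0 g0 u0 v0\<close> by simp
    show "0 \<le> ?J x" for x by (simp add: J1_nonneg case_prod_beta)
    fix X and a :: "nat \<Rightarrow> real" and c
    assume "\<And>k. ?P (X k)" "\<And>k. ?J (X k) \<le> ereal (a k)" "a \<longlonglongrightarrow> c"
    then have "\<exists>m f u v. feasible \<kappa> n p f0 f1 m f u v \<and> J1 (n * p) u v \<le> ereal c"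
      by (intro feasible_minimizing_limit[OF assms(1-4), where M = "\<lambda>k. fst (X k)"
          and F = "\<lambda>k. fst (snd (X k))" and U = "\<lambda>k. fst (snd (snd (X k)))"
          and V = "\<lambda>k. snd (snd (snd (X k)))"]) (simp_all add: case_prod_beta)
    then show "\<exists>x. ?P x \<and> ?J x \<le> ereal c" by auto
  qed
  then show ?thesis by auto
qed

end
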